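(* Let $n,m\ge1$, let $\mathbb{U}$ be an input space, let $f:\mathbb{R}^n\times\mathbb{U}\to\mathbb{R}^m$ and $h:\mathbb{R}^n\to\mathbb{Y}$ be known measurable functions, and let $\Sigma\in\mathbb{R}^{n\times n}$ be a symmetric positive definite covariance matrix. For $\theta\in\mathbb{R}^{m\times n}$ let $\mathbf M(\theta)$ be the system $x_{k+1}=\theta^{\top}f(x_k,u_k)+w_k$, $y_k=h(x_k)$, with state space $\mathbb{R}^n$ and i.i.d. $w_k\sim\mathcal N(0,\Sigma)$, i.e. transition kernel $\mathbf t(dx^+\mid x,u;\theta)=\mathcal N(dx^+\mid\theta^{\top}f(x,u),\Sigma)$. Given data $\mathcal D$, let $\hat\theta\in\mathbb{R}^{m\times n}$, $\Sigma_N$ and $\Theta$ be the Bayesian linear regression estimate, posterior covariance and credible set at confidence $1-\alpha\in(0,1)$ (defined in the context), and let $\widehat{\mathbf M}=\mathbf M(\hat\theta)$, i.e. $\hat x_{k+1}=\hat\theta^{\top}f(\hat x_k,\hat u_k)+\hat w_k$, $\hat y_k=h(\hat x_k)$, $\hat w_k\sim\mathcal N(0,\Sigma)$, with the same initial state as $\mathbf M(\theta)$. Use the interface function $u=\hat u$ (i.e. $\mathcal I(\cdot\mid\hat x,x,\hat u)=\delta_{\hat u}$), the relation $\mathcal R=\{(\hat x,x)\in\mathbb{R}^n\times\mathbb{R}^n: \hat x=x\}$, and for $\theta\in\Theta$ the sub-probability kernel $$\boldsymbol v(A\mid\hat x,x,\hat u;\theta)=\int_{\mathbb{R}^n}\mathbf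 1_A\big(\hat\theta^{\top}f(\hat x,\hat u)+\gamma+w,\ \theta^{\top}f(x,\hat u)+w\big)\min\{\phi_\Sigma(w),\phi_\Sigma(w+\gamma)\}\,dw,$$ where $\gamma=\gamma(x,\hat u,\theta):=(\theta-\hat\theta)^{\top}f(x,\hat u)$ and $\phi_\Sigma$ is the density of $\mathcal N(0,\Sigma)$. Then for every $\theta\in\Theta$: (i) $\widehat{\mathbf M}$ is in an $(\varepsilon,\delta)$-sub-simulation relation with $\mathbf M(\theta)$ with $\varepsilon=0$ and state-dependent $$\delta(\hat x,\hat u)=1-2\,\mathrm{cdf}\Big(-\tfrac{\sqrt r}{2}\,\|f(\hat x,\hat u)\|\Big),\qquad r:=\|\Sigma^{-1}\|\,\|\Sigma_N\|\cdot n\cdot\chi^{-1}(1-\alpha\mid n),$$ meaning: $(\hat x_0,x_0)\in\mathcal R$; for all $(\hat x,x)\in\mathcal R$ and $\hat u\in\mathbb{U}$, $\boldsymbol v(\cdot\mid\hat x,x,\hat u;\theta)$ is a measure on $\mathbb{R}^n\times\mathbb{R}^n$ with $1\ge\boldsymbol v(\mathbb{R}^n\times\mathbb{R}^n)=\boldsymbol v(\mathcal R)\ge1-\delta(\hat x,\hat u)$, $\boldsymbol v(A\times\mathbb{R}^n)\le\mathcal N(A\mid\hat\theta^{\top}f(\hat x,\hat u),\Sigma)$ and $\boldsymbol v(\mathbb{R}^n\times B)\le\mathcal N(B\mid\theta^{\top}f(x,\hat u),\Sigma)$ for all measurable $A,B$; and $h(\hat x)=h(x)$ on $\mathcal R$;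 (ii) the deterministic, $\theta$-independent state mapping $\mathbf s(\cdot\mid\hat x,x,x^+,\hat u)=\delta_{x^{+}+\hat\theta^{\top}(f(\hat x,\hat u)-f(x,\hat u))}$ defines a valid control refinement, i.e. for all $(\hat x,x)\in\mathcal R$, $\hat u\in\mathbb{U}$ and measurable $A\subset\mathbb{R}^n\times\mathbb{R}^n$, $$\int_{\mathbb{R}^n}\mathbf 1_A\big(x^{+}+\hat\theta^{\top}(f(\hat x,\hat u)-f(x,\hat u)),\,x^{+}\big)\,\mathcal N(dx^{+}\mid\theta^{\top}f(x,\hat u),\Sigma)\ \ge\ \boldsymbol v(A\mid\hat x,x,\hat u;\theta).$$
   Context: Bayesian linear regression: the data are $\mathcal D=\{(x^{(i)},u^{(i)},x^{+(i)})\}_{i=1}^N$ with $x^{+(i)}=\theta^{\ast\top}f(x^{(i)},u^{(i)})+w^{(i)}$. Write $\theta=[\theta_1,\dots,\theta_n]$ with columns $\theta_j\in\mathbb{R}^m$ and $\bar\theta=[\theta_1;\dots;\theta_n]\in\mathbb{R}^{nm}$. With prior $\mathcal N(\bar\theta\mid\mu_0,\Sigma_0)$, design matrix $\Phi\in\mathbb{R}^{N\times m}$ with rows $f(x^{(i)},u^{(i)})^{\top}$, and $X^+$ the stacked vector $[x^{+(1)}_1;\dots;x^{+(N)}_1;\dots;x^{+(1)}_n;\dots;x^{+(N)}_n]$, the posterior is $\mathcal N(\bar\theta\mid\mu_N,\Sigma_N)$ with $\Sigma_N^{-1}=\Sigma_0^{-1}+\Sigma^{-1}\otimes\Phi^{\top}\Phi$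 and $\mu_N=\Sigma_N(\Sigma_0^{-1}\mu_0+(\Sigma^{-1}\otimes\Phi^{\top})X^+)$ ($\otimes$ the Kronecker product). The estimate $\hat\theta\in\mathbb{R}^{m\times n}$ has columns the consecutive $m$-blocks of $\mu_N$. The credible set is $\Theta=\{\theta\in\mathbb{R}^{m\times n}:(\bar\theta-\mu_N)^{\top}\Sigma_N^{-1}(\bar\theta-\mu_N)\le n\,\chi^{-1}(1-\alpha\mid n)\}$, where $\chi^{-1}(\cdot\mid n)$ is the quantile function of the chi-squared distribution with $n$ degrees of freedom. $\mathrm{cdf}$ is the standard normal cumulative distribution function, $\|\cdot\|$ is the Euclidean norm on vectors and the induced spectral norm on matrices, $\mathcal N(\cdot\mid\mu,\Sigma)$ the Gaussian measure, and $\delta_a$ the Dirac measure at $a$. *)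

theory Defs
  imports "HOL-Probability.Probability"
begin

definition pos_def :: "real^'n^'n \<Rightarrow> bool" where
  "pos_def S \<longleftrightarrow> transpose S = S \<and> (\<forall>x. x \<noteq> 0 \<longrightarrow> 0 < x \<bullet> (S *v x))"

definition gauss_density :: "real^'n^'n \<Rightarrow> real^'n \<Rightarrow> real" where
  "gauss_density S w =
     exp (- (w \<bullet> (matrix_inv S *v w)) / 2) / sqrt ((2 * pi) ^ CARD('n) * det S)"

definition gauss :: "real^'n \<Rightarrow> real^'n^'n \<Rightarrow> (real^'n) measure" where
  "gauss mu S = density lborel (\<lambda>x. ennreal (gauss_density S (x - mu)))"

definition std_normal_cdf :: "real \<Rightarrow> real" where
  "std_normal_cdf t = measure (density lborel std_normal_density) {..t}"

definition chi2_density :: "nat \<Rightarrow> real \<Rightarrow> real" where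
  "chi2_density k x = (if 0 < x then x powr (real k / 2 - 1) * exp (- x / 2)
                        / (2 powr (real k / 2) * Gamma (real k / 2)) else 0)"

definition chi2_cdf :: "nat \<Rightarrow> real \<Rightarrow> real" where
  "chi2_cdf k t = measure (density lborel (\<lambda>x. ennreal (chi2_density k x))) {..t}"

definition chi2_quantile :: "nat \<Rightarrow> real \<Rightarrow> real" where
  "chi2_quantile k p = Inf {t. p \<le> chi2_cdf k t}"

text \<open>Kronecker product; the index (j,i) of the stacked vector/matrix refers to
  entry i of block j.\<close>
definition kron :: "real^'a^'a \<Rightarrow> real^'b^'b \<Rightarrow> real^('a \<times> 'b)^('a \<times> 'b)" where
  "kron A B = (\<chi> p q. A $ fst p $ fst q * B $ snd p $ snd q)"

text \<open>theta :: real^'n^'m is an m x n matrix (row index in 'm, column index in 'n).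
  vec_theta stacks its columns: vec_theta theta $ (j,i) = theta_{i j}.\<close>
definition vec_theta :: "real^'n^'m \<Rightarrow> real^('n \<times> 'm)" where
  "vec_theta th = (\<chi> p. th $ snd p $ fst p)"

definition unvec_theta :: "real^('n \<times> 'm) \<Rightarrow> real^'n^'m" where
  "unvec_theta v = (\<chi> i j. v $ (j, i))"

text \<open>Bayesian linear regression. Data: N samples (xs i, us i, xps i), i < N.
  PhiTPhi = Phi^T Phi; blr_rhs = (Sigma^-1 \<otimes> Phi^T) X^+ written out entrywise.\<close>
definition PhiTPhi :: "('x \<Rightarrow> 'u \<Rightarrow> real^'m) \<Rightarrow> nat \<Rightarrow> (nat \<Rightarrow> 'x) \<Rightarrow> (nat \<Rightarrow> 'u) \<Rightarrow> real^'m^'m" where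
  "PhiTPhi f N xs us = (\<chi> k l. \<Sum>i<N. f (xs i) (us i) $ k * f (xs i) (us i) $ l)"

definition blr_rhs :: "real^'n^'n \<Rightarrow> ('x \<Rightarrow> 'u \<Rightarrow> real^'m) \<Rightarrow> nat \<Rightarrow> (nat \<Rightarrow> 'x)
    \<Rightarrow> (nat \<Rightarrow> 'u) \<Rightarrow> (nat \<Rightarrow> real^'n) \<Rightarrow> real^('n \<times> 'm)" where
  "blr_rhs S f N xs us xps = (\<chi> p. \<Sum>j'\<in>UNIV. matrix_inv S $ fst p $ j' *
       (\<Sum>i<N. f (xs i) (us i) $ snd p * xps i $ j'))"

definition blr_SigmaN_inv :: "real^'n^'n \<Rightarrow> real^('n \<times> 'm)^('n \<times> 'm) \<Rightarrow> ('x \<Rightarrow> 'u \<Rightarrow> real^'m)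
    \<Rightarrow> nat \<Rightarrow> (nat \<Rightarrow> 'x) \<Rightarrow> (nat \<Rightarrow> 'u) \<Rightarrow> real^('n \<times> 'm)^('n \<times> 'm)" where
  "blr_SigmaN_inv S S0 f N xs us = matrix_inv S0 + kron (matrix_inv S) (PhiTPhi f N xs us)"

definition blr_SigmaN :: "real^'n^'n \<Rightarrow> real^('n \<times> 'm)^('n \<times> 'm) \<Rightarrow> ('x \<Rightarrow> 'u \<Rightarrow> real^'m)
    \<Rightarrow> nat \<Rightarrow> (nat \<Rightarrow> 'x) \<Rightarrow> (nat \<Rightarrow> 'u) \<Rightarrow> real^('n \<times> 'm)^('n \<times> 'm)" where
  "blr_SigmaN S S0 f N xs us = matrix_inv (blr_SigmaN_inv S S0 f N xs us)"

definition blr_muN :: "real^'n^'n \<Rightarrow> real^('n \<times> 'm)^('n \<times> 'm) \<Rightarrow> real^('n \<times> 'm)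
    \<Rightarrow> ('x \<Rightarrow> 'u \<Rightarrow> real^'m) \<Rightarrow> nat \<Rightarrow> (nat \<Rightarrow> 'x) \<Rightarrow> (nat \<Rightarrow> 'u) \<Rightarrow> (nat \<Rightarrow> real^'n)
    \<Rightarrow> real^('n \<times> 'm)" where
  "blr_muN S S0 mu0 f N xs us xps =
     blr_SigmaN S S0 f N xs us *v (matrix_inv S0 *v mu0 + blr_rhs S f N xs us xps)"

definition blr_estimate :: "real^'n^'n \<Rightarrow> real^('n \<times> 'm)^('n \<times> 'm) \<Rightarrow> real^('n \<times> 'm)
    \<Rightarrow> ('x \<Rightarrow> 'u \<Rightarrow> real^'m) \<Rightarrow> nat \<Rightarrow> (nat \<Rightarrow> 'x) \<Rightarrow> (nat \<Rightarrow> 'u) \<Rightarrow> (nat \<Rightarrow> real^'n)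
    \<Rightarrow> real^'n^'m" where
  "blr_estimate S S0 mu0 f N xs us xps = unvec_theta (blr_muN S S0 mu0 f N xs us xps)"

definition credible_set :: "real^'n^'n \<Rightarrow> real^('n \<times> 'm)^('n \<times> 'm) \<Rightarrow> real^('n \<times> 'm)
    \<Rightarrow> ('x \<Rightarrow> 'u \<Rightarrow> real^'m) \<Rightarrow> nat \<Rightarrow> (nat \<Rightarrow> 'x) \<Rightarrow> (nat \<Rightarrow> 'u) \<Rightarrow> (nat \<Rightarrow> real^'n)
    \<Rightarrow> real \<Rightarrow> (real^'n^'m) set" where
  "credible_set S S0 mu0 f N xs us xps \<alpha> =
     {th. let d = vec_theta th - blr_muN S S0 mu0 f N xs us xps in
          d \<bullet> (blr_SigmaN_inv S S0 f N xs us *v d)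
            \<le> real CARD('n) * chi2_quantile CARD('n) (1 - \<alpha>)}"

definition sim_rel :: "('a \<times> 'a) set" where
  "sim_rel = {(a, b). a = b}"

definition sub_kernel :: "real^'n^'n \<Rightarrow> ('x \<Rightarrow> 'u \<Rightarrow> real^'m) \<Rightarrow> real^'n^'m \<Rightarrow> real^'n^'m
    \<Rightarrow> 'x \<Rightarrow> 'x \<Rightarrow> 'u \<Rightarrow> ((real^'n) \<times> (real^'n)) set \<Rightarrow> ennreal" where
  "sub_kernel S f thh th xh x u A =
     (let \<gamma> = transpose (th - thh) *v f x u in
      \<integral>\<^sup>+ w. indicator A (transpose thh *v f xh u + \<gamma> + w, transpose th *v f x u + w)
             * ennreal (min (gauss_density S w) (gauss_density S (w + \<gamma>))) \<partial>lborel)"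

end

theory Submission
  imports Defs
begin

(* On the relation xh = x the two coupled successor states thh^T f + gamma + w and th^T f + w
   coincide, so the kernel v lives on the diagonal. Its weight min (phi w) (phi (w + gamma)) lies
   below both Gaussian densities, which gives the two marginal bounds and the refinement
   inequality, and its mass is the overlap of N(0, S) and N(-gamma, S), namely
   2 cdf (- |gamma|_{S^-1} / 2). This overlap is computed by a change of variables, a product of
   shears that preserves Lebesgue measure, sends a coordinate axis onto gamma and diagonalizes
   S^-1; the integral then factorizes into one-dimensional ones. Finally, for th in the credible
   set, |gamma|^2_{S^-1} <= r |f|^2 by Cauchy-Schwarz for the posterior precision form. *)

section \<open>Overlap of two shifted standard normal densities\<close>

definition normal_overlap :: "real \<Rightarrow> ennreal" where
  "normal_overlap a =
     (\<integral>\<^sup>+u. ennreal (min (std_normal_density u) (std_normal_density (u + a))) \<partial>lborel)"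

lemma normal_overlap_minus: "normal_overlap (- a) = normal_overlap a"
proof -
  have "normal_overlap a = ennreal \<bar>1\<bar> * (\<integral>\<^sup>+x. ennreal (min (std_normal_density (- a + 1 * x))
      (std_normal_density (- a + 1 * x + a))) \<partial>lborel)"
    unfolding normal_overlap_def by (rule nn_integral_real_affine) auto
  also have "\<dots> = normal_overlap (- a)"
    unfolding normal_overlap_def by (auto intro!: nn_integral_cong simp: min.commute)
  finally show ?thesis by simp
qed

lemma normal_overlap_0: "normal_overlap 0 = 1"
proof -
  interpret prob_space "density lborel std_normal_density"
    by (rule prob_space_normal_density) simp
  have "normal_overlap 0 = emeasure (density lborel std_normal_density) UNIV"
    unfolding normal_overlap_def by (subst emeasure_density) auto
  then show ?thesis
    using emeasure_space_1 by simp
qed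

lemma nn_integral_std_normal_atMost:
  "(\<integral>\<^sup>+u. ennreal (std_normal_density u) * indicator {..t} u \<partial>lborel) = ennreal (std_normal_cdf t)"
proof -
  interpret prob_space "density lborel std_normal_density"
    by (rule prob_space_normal_density) simp
  have "(\<integral>\<^sup>+u. ennreal (std_normal_density u) * indicator {..t} u \<partial>lborel)
      = emeasure (density lborel std_normal_density) {..t}"
    by (subst emeasure_density) (auto simp: mult.commute)
  then show ?thesis
    by (simp add: std_normal_cdf_def emeasure_eq_measure)
qed

lemma nn_integral_std_normal_greaterThan:
  "(\<integral>\<^sup>+x. ennreal (std_normal_density x) * indicator {t<..} x \<partial>lborel) = ennreal (std_normal_cdf (- t))"
proof -
  have "(\<integral>\<^sup>+x. ennreal (std_normal_density x) * indicator {t<..} x \<partial>lborel)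
      = ennreal \<bar>-1\<bar> * (\<integral>\<^sup>+x. ennreal (std_normal_density (0 + -1 * x))
          * indicator {t<..} (0 + -1 * x) \<partial>lborel)"
    by (rule nn_integral_real_affine) auto
  also have "\<dots> = (\<integral>\<^sup>+x. ennreal (std_normal_density x) * indicator {..<- t} x \<partial>lborel)"
    by (auto intro!: nn_integral_cong simp: indicator_def normal_density_def)
  also have "\<dots> = (\<integral>\<^sup>+x. ennreal (std_normal_density x) * indicator {..- t} x \<partial>lborel)"
    by (intro nn_integral_cong_AE, use AE_lborel_singleton[of "- t"] in eventually_elim)
      (auto simp: indicator_def)
  finally show ?thesis
    by (simp add: nn_integral_std_normal_atMost)
qed

lemma std_normal_cdf_mono:
  assumes "a \<le> b"
  shows "std_normal_cdf a \<le> std_normal_cdf b"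
proof -
  interpret prob_space "density lborel std_normal_density"
    by (rule prob_space_normal_density) simp
  show ?thesis
    unfolding std_normal_cdf_def using assms by (intro finite_measure_mono) auto
qed

lemma std_normal_density_le: "x\<^sup>2 \<le> y\<^sup>2 \<Longrightarrow> std_normal_density y \<le> std_normal_density x"
  unfolding std_normal_density_def by (simp add: divide_right_mono)

text \<open>Left of the midpoint \<open>- a / 2\<close> the minimum is \<open>std_normal_density u\<close>, right of it
  \<open>std_normal_density (u + a)\<close>; by symmetry both pieces have mass \<open>std_normal_cdf (- a / 2)\<close>.\<close>
lemma normal_overlap_eq:
  assumes a: "0 \<le> a"
  shows "normal_overlap a = ennreal (2 * std_normal_cdf (- a / 2))"
proof -
  let ?\<psi> = "std_normal_density"
  have split: "ennreal (min (?\<psi> u) (?\<psi> (u + a))) =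
      ennreal (?\<psi> u) * indicator {..- a / 2} u + ennreal (?\<psi> (u + a)) * indicator {- a / 2<..} u"
    for u
  proof -
    have diff: "(u + a)\<^sup>2 - u\<^sup>2 = a * (2 * u + a)"
      by (simp add: power2_eq_square algebra_simps)
    show ?thesis
    proof (cases "u \<le> - a / 2")
      case True
      with a have "a * (2 * u + a) \<le> 0"
        by (intro mult_nonneg_nonpos) auto
      with diff have "(u + a)\<^sup>2 \<le> u\<^sup>2"
        by simp
      then have "?\<psi> u \<le> ?\<psi> (u + a)"
        by (rule std_normal_density_le)
      with True show ?thesis
        by (simp add: min_def)
    next
      case False
      with a have "0 \<le> a * (2 * u + a)"
        by (intro mult_nonneg_nonneg) auto
      with diff have "u\<^sup>2 \<le> (u + a)\<^sup>2"
        by simp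
      then have "?\<psi> (u + a) \<le> ?\<psi> u"
        by (rule std_normal_density_le)
      with False show ?thesis
        by (simp add: min_def)
    qed
  qed
  have "(\<integral>\<^sup>+u. ennreal (?\<psi> (u + a)) * indicator {- a / 2<..} u \<partial>lborel)
      = ennreal \<bar>1\<bar> * (\<integral>\<^sup>+x. ennreal (?\<psi> (- a + 1 * x + a))
          * indicator {- a / 2<..} (- a + 1 * x) \<partial>lborel)"
    by (rule nn_integral_real_affine) auto
  also have "\<dots> = (\<integral>\<^sup>+x. ennreal (?\<psi> x) * indicator {a / 2<..} x \<partial>lborel)"
    by (auto intro!: nn_integral_cong simp: indicator_def)
  finally have right_half: "(\<integral>\<^sup>+u. ennreal (?\<psi> (u + a)) * indicator {- a / 2<..} u \<partial>lborel)
      = ennreal (std_normal_cdf (- a / 2))"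
    by (simp add: nn_integral_std_normal_greaterThan)
  have "normal_overlap a = (\<integral>\<^sup>+u. ennreal (?\<psi> u) * indicator {..- a / 2} u \<partial>lborel)
      + (\<integral>\<^sup>+u. ennreal (?\<psi> (u + a)) * indicator {- a / 2<..} u \<partial>lborel)"
    unfolding normal_overlap_def split by (rule nn_integral_add) auto
  also have "\<dots> = ennreal (2 * std_normal_cdf (- a / 2))"
    using right_half nn_integral_std_normal_atMost
    by (simp add: ennreal_plus[symmetric] std_normal_cdf_def del: ennreal_plus)
  finally show ?thesis .
qed

lemma nn_integral_min_exp_quadratic:
  fixes d t :: real
  assumes d: "0 < d"
  shows "(\<integral>\<^sup>+s. ennreal (min (exp (- (d * s\<^sup>2) / 2)) (exp (- (d * (s + t)\<^sup>2) / 2))) \<partial>lborel)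
    = ennreal (sqrt (2 * pi) / sqrt d) * normal_overlap (sqrt d * t)"
proof -
  let ?c = "1 / sqrt d"
  have "?c \<noteq> 0" using d by simp
  then have "(\<integral>\<^sup>+s. ennreal (min (exp (- (d * s\<^sup>2) / 2)) (exp (- (d * (s + t)\<^sup>2) / 2))) \<partial>lborel)
    = ennreal \<bar>?c\<bar> * (\<integral>\<^sup>+x. ennreal (min (exp (- (d * (0 + ?c * x)\<^sup>2) / 2))
        (exp (- (d * (0 + ?c * x + t)\<^sup>2) / 2))) \<partial>lborel)"
    by (intro nn_integral_real_affine) auto
  also have "(\<lambda>x. ennreal (min (exp (- (d * (0 + ?c * x)\<^sup>2) / 2)) (exp (- (d * (0 + ?c * x + t)\<^sup>2) / 2))))
      = (\<lambda>x. ennreal (sqrt (2 * pi))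
          * ennreal (min (std_normal_density x) (std_normal_density (x + sqrt d * t))))"
  proof
    fix x
    have "d * (x / sqrt d)\<^sup>2 = x\<^sup>2" "d * (x / sqrt d + t)\<^sup>2 = (x + sqrt d * t)\<^sup>2"
      using d by (simp_all add: power2_eq_square field_simps)
    moreover have "min (exp (- x\<^sup>2 / 2)) (exp (- (x + sqrt d * t)\<^sup>2 / 2))
        = sqrt (2 * pi) * min (std_normal_density x) (std_normal_density (x + sqrt d * t))"
      by (simp add: std_normal_density_def min_mult_distrib_left)
    ultimately show "ennreal (min (exp (- (d * (0 + ?c * x)\<^sup>2) / 2)) (exp (- (d * (0 + ?c * x + t)\<^sup>2) / 2)))
      = ennreal (sqrt (2 * pi)) * ennreal (min (std_normal_density x) (std_normal_density (x + sqrt d * t)))"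
      by (simp add: ennreal_mult[symmetric])
  qed
  also have "(\<integral>\<^sup>+x. ennreal (sqrt (2 * pi))
      * ennreal (min (std_normal_density x) (std_normal_density (x + sqrt d * t))) \<partial>lborel)
      = ennreal (sqrt (2 * pi)) * normal_overlap (sqrt d * t)"
    unfolding normal_overlap_def by (rule nn_integral_cmult) measurable
  finally show ?thesis
    using d by (simp add: mult.assoc[symmetric] ennreal_mult[symmetric])
qed

section \<open>Shears preserve Lebesgue measure\<close>

lemma borel_measurable_matrix_vector_mult [measurable]:
  "(\<lambda>x. (E::real^'n::finite^'m::finite) *v x) \<in> borel_measurable borel"
  by (intro borel_measurable_continuous_onI linear_continuous_on matrix_vector_mul_bounded_linear)

definition shear :: "'n::finite \<Rightarrow> real^'n \<Rightarrow> real^'n^'n" where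
  "shear p c = (\<chi> i j. (if i = j then 1 else 0) - (if i = p then c $ j else 0))"

lemma shear_mult_vector: "shear p c *v x = x - (c \<bullet> x) *\<^sub>R axis p 1"
proof -
  have "(shear p c *v x) $ i = (x - (c \<bullet> x) *\<^sub>R axis p 1) $ i" for i
  proof -
    have "(shear p c *v x) $ i = (\<Sum>j\<in>UNIV. (if i = j then 1 else 0) * x$j)
        - (\<Sum>j\<in>UNIV. (if i = p then c$j else 0) * x$j)"
      by (simp add: matrix_vector_mult_def shear_def sum_subtractf left_diff_distrib)
    also have "(\<Sum>j\<in>UNIV. (if i = j then 1 else 0) * x$j) = x $ i"
      by (simp add: if_distrib[of "\<lambda>a. a * _"] cong: if_cong)
    also have "(\<Sum>j\<in>UNIV. (if i = p then c$j else 0) * x$j) = (if i = p then c \<bullet> x else 0)"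
      by (simp add: inner_vec_def)
    finally show ?thesis by (simp add: axis_def)
  qed
  then show ?thesis by (simp add: vec_eq_iff)
qed

lemma det_shear:
  fixes c :: "real^'n::finite"
  assumes cp: "c $ p = 0"
  shows "det (shear p c) = 1"
proof -
  have rows: "shear p c = (\<chi> k. if k = p then row p (mat 1) + (- c) else row k (mat 1))"
    unfolding shear_def by (simp add: vec_eq_iff row_def mat_def)
  have "- c = (\<Sum>j\<in>UNIV-{p}. (- (c $ j)) *s row j (mat 1))"
  proof -
    have "(\<Sum>j\<in>UNIV-{p}. (- (c $ j)) *s row j (mat 1)) $ i = - c $ i" for i
    proof -
      have "(\<Sum>x\<in>UNIV - {p}. - (c $ x * (if x = i then 1 else 0)))
          = (\<Sum>x\<in>UNIV - {p}. (if x = i then - c$x else 0))"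
        by (rule sum.cong) auto
      then show ?thesis
        using cp by (simp add: row_def mat_def)
    qed
    then show ?thesis by (simp add: vec_eq_iff)
  qed
  also have "\<dots> \<in> vec.span {row j (mat 1) | j. j \<noteq> p}"
    by (intro vec.span_sum vec.span_scale vec.span_base) auto
  finally show ?thesis
    using det_row_span[of "- c" "mat 1" p] by (simp add: rows)
qed

lemma nn_integral_lborel_split_axis:
  fixes p :: "'n::finite" and F :: "real^'n \<Rightarrow> ennreal"
  assumes [measurable]: "F \<in> borel_measurable borel"
  shows "(\<integral>\<^sup>+x. F x \<partial>lborel) =
    (\<integral>\<^sup>+g. (\<integral>\<^sup>+t. F ((\<Sum>b\<in>Basis-{axis p 1}. g b *\<^sub>R b) + t *\<^sub>R axis p 1) \<partial>lborel)
      \<partial>(\<Pi>\<^sub>M b\<in>Basis-{axis p 1}. (lborel::real measure)))"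
proof -
  interpret P: product_sigma_finite "\<lambda>_::real^'n. lborel::real measure"
    by standard
  have Basis_eq: "Basis = insert (axis p 1) (Basis - {axis p (1::real)})"
    by (auto simp: Basis_vec_def)
  have sum_upd: "(\<Sum>b\<in>Basis. (g(axis p 1 := t)) b *\<^sub>R b)
      = (\<Sum>b\<in>Basis-{axis p 1}. g b *\<^sub>R b) + t *\<^sub>R axis p 1" for g :: "real^'n \<Rightarrow> real" and t
  proof -
    have "(\<Sum>b\<in>Basis. (g(axis p 1 := t)) b *\<^sub>R b)
        = t *\<^sub>R axis p 1 + (\<Sum>b\<in>Basis-{axis p 1}. (g(axis p 1 := t)) b *\<^sub>R b)"
      by (subst sum.remove[of _ "axis p 1"]) (auto simp: Basis_vec_def)
    also have "\<dots> = t *\<^sub>R axis p 1 + (\<Sum>b\<in>Basis-{axis p 1}. g b *\<^sub>R b)"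
      by (auto intro!: sum.cong)
    finally show ?thesis by simp
  qed
  have "(\<integral>\<^sup>+x. F x \<partial>(lborel::(real^'n) measure)) =
      (\<integral>\<^sup>+g. F (\<Sum>b\<in>Basis. g b *\<^sub>R b) \<partial>(\<Pi>\<^sub>M b\<in>Basis. (lborel::real measure)))"
    by (subst lborel_eq[where 'a="real^'n"]) (simp add: nn_integral_distr)
  also have "\<dots> = (\<integral>\<^sup>+g. F (\<Sum>b\<in>Basis. g b *\<^sub>R b)
      \<partial>(\<Pi>\<^sub>M b\<in>insert (axis p 1) (Basis - {axis p (1::real)}). (lborel::real measure)))"
    using Basis_eq by simp
  also have "\<dots> = (\<integral>\<^sup>+g. (\<integral>\<^sup>+t. F (\<Sum>b\<in>Basis. (g(axis p 1 := t)) b *\<^sub>R b) \<partial>lborel)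
      \<partial>(\<Pi>\<^sub>M b\<in>Basis-{axis p 1}. (lborel::real measure)))"
    by (subst P.product_nn_integral_insert) simp_all
  finally show ?thesis
    by (simp only: sum_upd)
qed

text \<open>A shear moves each point along \<open>axis p 1\<close> by an amount depending only on the
  other coordinates, so by Fubini it is a translation on every line parallel to that axis.\<close>
lemma nn_integral_lborel_shear:
  fixes g :: "real^'n::finite \<Rightarrow> ennreal" and c :: "real^'n"
  assumes cp: "c $ p = 0" and [measurable]: "g \<in> borel_measurable borel"
  shows "(\<integral>\<^sup>+x. g (x - (c \<bullet> x) *\<^sub>R axis p 1) \<partial>lborel) = (\<integral>\<^sup>+x. g x \<partial>lborel)"
proof (subst (1 2) nn_integral_lborel_split_axis[where p=p], measurable, rule nn_integral_cong)
  fix h :: "real^'n \<Rightarrow> real"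
  let ?r = "\<Sum>b\<in>Basis-{axis p 1}. h b *\<^sub>R b"
  have c_axis: "c \<bullet> axis p 1 = 0"
    using cp by (simp add: inner_axis)
  have "(\<integral>\<^sup>+t. g (?r + t *\<^sub>R axis p 1 - (c \<bullet> (?r + t *\<^sub>R axis p 1)) *\<^sub>R axis p 1) \<partial>lborel)
      = (\<integral>\<^sup>+t. g (?r + (- (c \<bullet> ?r) + 1 * t) *\<^sub>R axis p 1) \<partial>lborel)"
    by (intro nn_integral_cong) (simp add: c_axis algebra_simps)
  also have "\<dots> = (\<integral>\<^sup>+t. g (?r + t *\<^sub>R axis p 1) \<partial>lborel)"
    by (subst nn_integral_real_affine[where c=1 and t="- (c \<bullet> ?r)"]) simp_all
  finally show "(\<integral>\<^sup>+t. g (?r + t *\<^sub>R axis p 1 - (c \<bullet> (?r + t *\<^sub>R axis p 1)) *\<^sub>R axis p 1) \<partial>lborel)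
      = (\<integral>\<^sup>+t. g (?r + t *\<^sub>R axis p 1) \<partial>lborel)" .
qed

definition lborel_preserving :: "real^'n::finite^'n \<Rightarrow> bool" where
  "lborel_preserving E \<longleftrightarrow> distr lborel borel (\<lambda>x. E *v x) = lborel"

lemma nn_integral_lborel_preserving:
  assumes "lborel_preserving E" and "g \<in> borel_measurable borel"
  shows "(\<integral>\<^sup>+x. g (E *v x) \<partial>lborel) = (\<integral>\<^sup>+x. g x \<partial>lborel)"
proof -
  have "(\<integral>\<^sup>+x. g (E *v x) \<partial>lborel) = (\<integral>\<^sup>+x. g x \<partial>distr lborel borel (\<lambda>x. E *v x))"
    using assms(2) by (simp add: nn_integral_distr)
  with assms(1) show ?thesis
    by (simp add: lborel_preserving_def)
qed

lemma lborel_preserving_mat_1: "lborel_preserving (mat 1)"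
  by (simp add: lborel_preserving_def distr_id2)

lemma lborel_preserving_mult:
  assumes "lborel_preserving E" and "lborel_preserving F"
  shows "lborel_preserving (E ** F)"
proof -
  have "distr lborel borel (\<lambda>x. (E ** F) *v x)
      = distr (distr lborel borel (\<lambda>x. F *v x)) borel (\<lambda>x. E *v x)"
    by (subst distr_distr) (simp_all add: o_def matrix_vector_mul_assoc)
  with assms show ?thesis
    by (simp add: lborel_preserving_def)
qed

lemma lborel_preserving_shear:
  assumes "c $ p = 0"
  shows "lborel_preserving (shear p c)"
  unfolding lborel_preserving_def
proof (rule measure_eqI)
  fix A :: "(real^'a) set" assume A: "A \<in> sets (distr lborel borel (\<lambda>x. shear p c *v x))"
  then have [measurable]: "A \<in> sets borel" by simp
  have "emeasure (distr lborel borel (\<lambda>x. shear p c *v x)) A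
      = (\<integral>\<^sup>+x. indicator A x \<partial>distr lborel borel (\<lambda>x. shear p c *v x))"
    by simp
  also have "\<dots> = (\<integral>\<^sup>+x. indicator A (x - (c \<bullet> x) *\<^sub>R axis p 1) \<partial>lborel)"
    using nn_integral_distr[of "\<lambda>x. shear p c *v x" lborel borel "indicator A"]
    by (simp add: shear_mult_vector)
  also have "\<dots> = emeasure lborel A"
    by (simp add: nn_integral_lborel_shear[OF assms])
  finally show "emeasure (distr lborel borel (\<lambda>x. shear p c *v x)) A = emeasure lborel A" .
qed simp

lemma symmetric_matrix_inner_commute:
  fixes A :: "real^'n::finite^'n"
  assumes "transpose A = A"
  shows "x \<bullet> (A *v y) = y \<bullet> (A *v x)"
proof -
  have "x \<bullet> (A *v y) = (transpose A *v x) \<bullet> y"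
    by (simp add: dot_lmul_matrix)
  with assms show ?thesis
    by (simp add: inner_commute)
qed

lemma matrix_vector_mult_eq_0_iff:
  fixes E :: "real^'n::finite^'n"
  assumes "det E \<noteq> 0"
  shows "E *v x = 0 \<longleftrightarrow> x = 0"
  using assms inj_matrix_vector_mult[of E] invertible_det_nz[of E]
  by (metis injD matrix_vector_mult_0_right)

lemma inner_congruence:
  fixes E A :: "real^'n::finite^'n"
  shows "x \<bullet> ((transpose E ** A ** E) *v y) = (E *v x) \<bullet> (A *v (E *v y))"
proof -
  have "(transpose E ** A ** E) *v y = transpose E *v (A *v (E *v y))"
    by (simp add: matrix_vector_mul_assoc matrix_mul_assoc)
  then have "x \<bullet> ((transpose E ** A ** E) *v y) = ((A *v (E *v y)) v* E) \<bullet> x"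
    by (simp add: inner_commute)
  also have "\<dots> = (A *v (E *v y)) \<bullet> (E *v x)"
    by (simp add: dot_lmul_matrix)
  finally show ?thesis
    by (simp add: inner_commute)
qed

lemma matrix_entry_inner:
  fixes B :: "real^'n::finite^'n"
  shows "B $ i $ j = axis i 1 \<bullet> (B *v axis j 1)"
proof -
  have "(B *v axis j 1) $ i = B $ i $ j"
    by (simp add: matrix_vector_mult_def axis_def if_distrib[of "\<lambda>a. _ * a"] cong: if_cong)
  then show ?thesis
    by (simp add: inner_axis')
qed

lemma matrix_inv_right:
  fixes A :: "real^'n::finite^'n"
  assumes "invertible A"
  shows "A ** matrix_inv A = mat 1"
proof -
  have "\<exists>A'. A ** A' = mat 1 \<and> A' ** A = mat 1"
    using assms by (simp add: invertible_def)
  then have "A ** matrix_inv A = mat 1 \<and> matrix_inv A ** A = mat 1"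
    unfolding matrix_inv_def by (rule someI_ex)
  then show ?thesis ..
qed

lemma det_matrix_inv:
  fixes A :: "real^'n::finite^'n"
  assumes "invertible A"
  shows "det A * det (matrix_inv A) = 1"
  by (metis assms matrix_inv_right det_I det_mul)

lemma pos_def_nonneg:
  assumes "pos_def A"
  shows "0 \<le> x \<bullet> (A *v x)"
  using assms unfolding pos_def_def by (cases "x = 0") (auto intro: less_imp_le)

lemma pos_def_invertible:
  fixes A :: "real^'n::finite^'n"
  assumes "pos_def A"
  shows "invertible A"
proof -
  have "A *v x = 0 \<Longrightarrow> x = 0" for x
    using assms unfolding pos_def_def by (metis inner_zero_right less_irrefl)
  then show ?thesis
    using matrix_left_invertible_ker invertible_left_inverse by blast
qed

lemma pos_def_matrix_inv:
  fixes A :: "real^'n::finite^'n"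
  assumes A: "pos_def A"
  shows "pos_def (matrix_inv A)"
  unfolding pos_def_def
proof (intro conjI allI impI)
  have inv: "invertible A"
    using A by (rule pos_def_invertible)
  have "transpose A = A"
    using A by (simp add: pos_def_def)
  then have "transpose (matrix_inv A) ** A = mat 1"
    using matrix_inv_right[OF inv] by (metis matrix_transpose_mul transpose_mat)
  then show "transpose (matrix_inv A) = matrix_inv A"
    using matrix_inv_right[OF inv] by (metis matrix_mul_assoc matrix_mul_lid matrix_mul_rid)
  fix x :: "real^'n" assume "x \<noteq> 0"
  let ?y = "matrix_inv A *v x"
  have Ay: "A *v ?y = x"
    using matrix_inv_right[OF inv] by (simp add: matrix_vector_mul_assoc)
  with \<open>x \<noteq> 0\<close> have "?y \<noteq> 0" by auto
  with A have "0 < ?y \<bullet> (A *v ?y)"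
    by (simp add: pos_def_def)
  with Ay show "0 < x \<bullet> ?y"
    by (simp add: inner_commute)
qed

lemma pos_def_congruence:
  fixes G M :: "real^'n::finite^'n"
  assumes M: "pos_def M" and G: "det G \<noteq> 0"
  shows "pos_def (transpose G ** M ** G)"
  unfolding pos_def_def
proof (intro conjI allI impI)
  show "transpose (transpose G ** M ** G) = transpose G ** M ** G"
    using M by (simp add: pos_def_def matrix_transpose_mul matrix_mul_assoc)
  fix x :: "real^'n" assume "x \<noteq> 0"
  with G have "G *v x \<noteq> 0"
    by (simp add: matrix_vector_mult_eq_0_iff)
  with M show "0 < x \<bullet> ((transpose G ** M ** G) *v x)"
    by (simp add: inner_congruence pos_def_def)
qed

section \<open>Diagonalizing a quadratic form by shears\<close>

definition conjugate_columns :: "real^'n::finite^'n \<Rightarrow> real^'n^'n \<Rightarrow> 'n set \<Rightarrow> bool" where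
  "conjugate_columns A E J \<longleftrightarrow>
     (\<forall>i\<in>J. \<forall>j. j \<noteq> i \<longrightarrow> (E *v axis i 1) \<bullet> (A *v (E *v axis j 1)) = 0)"

lemma quadratic_form_diagonal_congruence:
  fixes E A :: "real^'n::finite^'n"
  assumes off: "conjugate_columns A E UNIV"
  shows "(E *v z) \<bullet> (A *v (E *v z)) = (\<Sum>i\<in>UNIV. (E *v axis i 1) \<bullet> (A *v (E *v axis i 1)) * (z$i)\<^sup>2)"
proof -
  let ?B = "transpose E ** A ** E"
  have B_entry: "?B $ i $ j = (E *v axis i 1) \<bullet> (A *v (E *v axis j 1))" for i j
    by (simp add: matrix_entry_inner inner_congruence)
  have "(E *v z) \<bullet> (A *v (E *v z)) = z \<bullet> (?B *v z)"
    by (simp add: inner_congruence)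
  also have "\<dots> = (\<Sum>i\<in>UNIV. z $ i * (\<Sum>j\<in>UNIV. ?B $ i $ j * z $ j))"
    by (simp add: inner_vec_def matrix_vector_mult_def)
  also have "\<dots> = (\<Sum>i\<in>UNIV. z $ i * (\<Sum>j\<in>UNIV. if j = i then ?B $ i $ i * z $ i else 0))"
    by (intro sum.cong refl arg_cong2[where f="(*)"]) (auto simp: B_entry off[unfolded conjugate_columns_def])
  also have "\<dots> = (\<Sum>i\<in>UNIV. (E *v axis i 1) \<bullet> (A *v (E *v axis i 1)) * (z$i)\<^sup>2)"
    by (simp add: B_entry power2_eq_square algebra_simps)
  finally show ?thesis .
qed

lemma det_diagonal_congruence:
  fixes E A :: "real^'n::finite^'n"
  assumes off: "conjugate_columns A E UNIV"
    and "det E = 1"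
  shows "det A = (\<Prod>i\<in>UNIV. (E *v axis i 1) \<bullet> (A *v (E *v axis i 1)))"
proof -
  let ?B = "transpose E ** A ** E"
  have B_entry: "?B $ i $ j = (E *v axis i 1) \<bullet> (A *v (E *v axis j 1))" for i j
    by (simp add: matrix_entry_inner inner_congruence)
  have "det A = det ?B"
    using \<open>det E = 1\<close> by (simp add: det_mul)
  also have "\<dots> = (\<Prod>i\<in>UNIV. ?B $ i $ i)"
    by (rule det_diagonal) (simp add: B_entry off[unfolded conjugate_columns_def])
  finally show ?thesis
    by (simp add: B_entry)
qed

text \<open>Gram--Schmidt for the form of \<open>A\<close>: every column outside \<open>insert p J\<close> loses its
  \<open>A\<close>-projection onto column \<open>p\<close>, which amounts to multiplying by a shear.\<close>
lemma shear_orthogonalization_step: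
  fixes A E :: "real^'n::finite^'n"
  assumes A: "pos_def A" and E: "lborel_preserving E" "det E = 1"
    and orth: "conjugate_columns A E J"
    and p: "p \<notin> J"
  shows "\<exists>E'. lborel_preserving E' \<and> det E' = 1
    \<and> conjugate_columns A E' (insert p J)
    \<and> (\<forall>q\<in>insert p J. E' *v axis q 1 = E *v axis q 1)"
proof -
  define b where "b i j = (E *v axis i 1) \<bullet> (A *v (E *v axis j 1))" for i j
  have b_sym: "b i j = b j i" for i j
    using A unfolding b_def pos_def_def by (blast intro: symmetric_matrix_inner_commute)
  have "E *v axis p 1 \<noteq> 0"
    using E(2) by (simp add: matrix_vector_mult_eq_0_iff)
  then have b_pp: "b p p > 0"
    using A unfolding b_def pos_def_def by blast
  define c where "c = (\<chi> j. if j = p then 0 else b p j / b p p)"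
  have c_p: "c $ p = 0"
    by (simp add: c_def)
  have c_J: "c $ q = 0" if "q \<in> J" for q
  proof -
    have "q \<noteq> p" using that p by auto
    with that orth b_sym[of p q] show ?thesis
      unfolding b_def c_def conjugate_columns_def by auto
  qed
  define E' where "E' = E ** shear p c"
  have E'_col: "E' *v axis j 1 = E *v axis j 1 - c$j *\<^sub>R (E *v axis p 1)" for j
    by (simp add: E'_def matrix_vector_mul_assoc[symmetric] shear_mult_vector inner_axis
        matrix_vector_mult_diff_distrib matrix_vector_mult_scaleR)
  have b': "(E' *v axis i 1) \<bullet> (A *v (E' *v axis j 1))
      = b i j - c$j * b i p - c$i * b p j + c$i * c$j * b p p" for i j
    by (simp add: E'_col b_def algebra_simps)
  have "conjugate_columns A E' (insert p J)"
    unfolding conjugate_columns_def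
  proof (intro ballI allI impI)
    fix i j assume i: "i \<in> insert p J" and "j \<noteq> i"
    show "(E' *v axis i 1) \<bullet> (A *v (E' *v axis j 1)) = 0"
    proof (cases "i = p")
      case True
      with \<open>j \<noteq> i\<close> b_pp show ?thesis
        by (simp add: b' c_p c_def)
    next
      case False
      with i have "i \<in> J" by auto
      with orth \<open>j \<noteq> i\<close> False have "b i j = 0" "b i p = 0"
        unfolding b_def conjugate_columns_def by auto
      then show ?thesis
        by (simp add: b' c_J[OF \<open>i \<in> J\<close>])
    qed
  qed
  moreover have "lborel_preserving E'"
    unfolding E'_def by (intro lborel_preserving_mult E(1) lborel_preserving_shear c_p)
  moreover have "det E' = 1"
    using E(2) det_shear[OF c_p] by (simp add: E'_def det_mul)
  moreover have "\<forall>q\<in>insert p J. E' *v axis q 1 = E *v axis q 1"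
    using c_p c_J by (auto simp: E'_col)
  ultimately show ?thesis by blast
qed

lemma exists_shear_diagonalization:
  fixes A :: "real^'n::finite^'n"
  assumes A: "pos_def A"
  shows "\<exists>E. lborel_preserving E \<and> det E = 1 \<and> E *v axis k 1 = axis k 1
    \<and> conjugate_columns A E UNIV"
proof -
  have "\<exists>E. lborel_preserving E \<and> det E = 1 \<and> E *v axis k 1 = axis k 1
    \<and> conjugate_columns A E (insert k J)"
    if "finite J" for J
    using that
  proof (induction J rule: finite_induct)
    case empty
    show ?case
      using shear_orthogonalization_step[OF A lborel_preserving_mat_1 det_I, of "{}" k]
      by (auto simp: conjugate_columns_def)
  next
    case (insert p J)
    then obtain E where E: "lborel_preserving E" "det E = 1" "E *v axis k 1 = axis k 1"
      "conjugate_columns A E (insert k J)"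
      by blast
    show ?case
    proof (cases "p = k")
      case True
      with E show ?thesis by (metis insert_absorb2)
    next
      case False
      with insert.hyps have "p \<notin> insert k J" by auto
      from shear_orthogonalization_step[OF A E(1,2,4) this] E(3) show ?thesis
        by (auto simp: insert_commute)
    qed
  qed
  from this[of UNIV] show ?thesis by auto
qed

lemma exists_shear_product_mapping_axis:
  fixes w :: "real^'n::finite"
  assumes w_k: "w $ k = 1"
  shows "\<exists>G. lborel_preserving G \<and> det G = 1 \<and> G *v axis k 1 = w"
proof -
  have "\<exists>G. lborel_preserving G \<and> det G = 1
      \<and> G *v axis k 1 = axis k 1 + (\<Sum>j\<in>J. w$j *\<^sub>R axis j 1)"
    if "finite J" "k \<notin> J" for J
    using that
  proof (induction J rule: finite_induct)
    case empty
    show ?case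
      by (intro exI[of _ "mat 1"]) (simp add: lborel_preserving_mat_1)
  next
    case (insert j J)
    then obtain G where G: "lborel_preserving G" "det G = 1"
      "G *v axis k 1 = axis k 1 + (\<Sum>j\<in>J. w$j *\<^sub>R axis j 1)"
      by auto
    have "j \<noteq> k" using insert by auto
    define c where "c = (- (w$j)) *\<^sub>R axis k (1::real)"
    have c_j: "c $ j = 0"
      using \<open>j \<noteq> k\<close> by (simp add: c_def axis_def)
    have "(G *v axis k 1) $ k = 1"
    proof -
      have "(\<Sum>x\<in>J. w $ x * (if k = x then 1 else 0)) = 0"
        using insert.prems by (intro sum.neutral) auto
      then show ?thesis
        using insert.prems unfolding G(3) by (simp add: axis_def)
    qed
    then have "(shear j c ** G) *v axis k 1 = G *v axis k 1 + w$j *\<^sub>R axis j 1"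
      by (simp add: matrix_vector_mul_assoc[symmetric] shear_mult_vector c_def inner_axis')
    then have "(shear j c ** G) *v axis k 1 = axis k 1 + (\<Sum>j\<in>insert j J. w$j *\<^sub>R axis j 1)"
      using insert.hyps by (simp add: G(3) algebra_simps)
    moreover have "lborel_preserving (shear j c ** G)"
      by (intro lborel_preserving_mult lborel_preserving_shear c_j G(1))
    moreover have "det (shear j c ** G) = 1"
      using G(2) det_shear[OF c_j] by (simp add: det_mul)
    ultimately show ?case by blast
  qed
  from this[of "UNIV - {k}"] obtain G where G: "lborel_preserving G" "det G = 1"
      "G *v axis k 1 = axis k 1 + (\<Sum>j\<in>UNIV - {k}. w$j *\<^sub>R axis j 1)"
    by auto
  have "axis k 1 + (\<Sum>j\<in>UNIV - {k}. w$j *\<^sub>R axis j 1) = w"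
  proof -
    have "(axis k 1 + (\<Sum>j\<in>UNIV - {k}. w$j *\<^sub>R axis j 1)) $ i = w $ i" for i
    proof -
      have "(\<Sum>j\<in>UNIV - {k}. (w$j *\<^sub>R axis j (1::real)) $ i)
          = (\<Sum>j\<in>UNIV - {k}. if j = i then w $ j else 0)"
        by (rule sum.cong) (auto simp: axis_def)
      then show ?thesis
        using w_k by (auto simp: axis_def)
    qed
    then show ?thesis by (simp add: vec_eq_iff)
  qed
  with G show ?thesis by auto
qed

lemma exists_lborel_preserving_diagonalization:
  fixes M :: "real^'n::finite^'n" and \<gamma> :: "real^'n"
  assumes M: "pos_def M"
  obtains T d t k where "lborel_preserving T" "\<And>i. 0 < d i" "det M = (\<Prod>i\<in>UNIV. d i)"
    "\<And>z. (T *v z) \<bullet> (M *v (T *v z)) = (\<Sum>i\<in>UNIV. d i * (z$i)\<^sup>2)"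
    "T *v (t *\<^sub>R axis k 1) = \<gamma>"
proof -
  obtain k t G where G: "lborel_preserving G" "det G = 1" "t *\<^sub>R (G *v axis k 1) = \<gamma>"
  proof (cases "\<gamma> = 0")
    case True
    then show ?thesis
      using that[of "mat 1" 0] by (simp add: lborel_preserving_mat_1)
  next
    case False
    then obtain k where k: "\<gamma> $ k \<noteq> 0"
      by (auto simp: vec_eq_iff)
    then have "((1 / \<gamma>$k) *\<^sub>R \<gamma>) $ k = 1"
      by simp
    from exists_shear_product_mapping_axis[OF this] obtain G
      where "lborel_preserving G" "det G = 1" "G *v axis k 1 = (1 / \<gamma>$k) *\<^sub>R \<gamma>"
      by blast
    with k show ?thesis
      using that[of G "\<gamma>$k" k] by simp
  qed
  define A where "A = transpose G ** M ** G"
  have A: "pos_def A"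
    unfolding A_def using M G(2) by (simp add: pos_def_congruence)
  obtain E where E: "lborel_preserving E" "det E = 1" "E *v axis k 1 = axis k 1"
    "conjugate_columns A E UNIV"
    using exists_shear_diagonalization[OF A, of k] by blast
  have A_form: "x \<bullet> (A *v y) = (G *v x) \<bullet> (M *v (G *v y))" for x y
    unfolding A_def by (rule inner_congruence)
  define d where "d i = (E *v axis i 1) \<bullet> (A *v (E *v axis i 1))" for i
  show ?thesis
  proof (rule that[of "G ** E" d])
    show "lborel_preserving (G ** E)"
      by (rule lborel_preserving_mult[OF G(1) E(1)])
    show "0 < d i" for i
      using A E(2) unfolding d_def pos_def_def
      by (simp add: matrix_vector_mult_eq_0_iff)
    show "det M = (\<Prod>i\<in>UNIV. d i)"
      using det_diagonal_congruence[OF E(4,2)] G(2) by (simp add: A_def d_def det_mul)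
    show "((G ** E) *v z) \<bullet> (M *v ((G ** E) *v z)) = (\<Sum>i\<in>UNIV. d i * (z$i)\<^sup>2)" for z
    proof -
      have "((G ** E) *v z) \<bullet> (M *v ((G ** E) *v z)) = (E *v z) \<bullet> (A *v (E *v z))"
        by (simp only: A_form matrix_vector_mul_assoc[symmetric])
      also have "\<dots> = (\<Sum>i\<in>UNIV. d i * (z$i)\<^sup>2)"
        unfolding d_def by (rule quadratic_form_diagonal_congruence[OF E(4)])
      finally show ?thesis .
    qed
    show "(G ** E) *v (t *\<^sub>R axis k 1) = \<gamma>"
      using G(3) E(3) by (simp add: matrix_vector_mul_assoc[symmetric] matrix_vector_mult_scaleR)
  qed
qed

section \<open>Overlap of two shifted Gaussian densities\<close>

lemma borel_measurable_gauss_density [measurable]: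
  fixes S :: "real^'n::finite^'n"
  shows "gauss_density S \<in> borel_measurable borel"
proof -
  have "gauss_density S = (\<lambda>w. exp (- (w \<bullet> (matrix_inv S *v w)) * (1 / 2))
      * (1 / sqrt ((2 * pi) ^ CARD('n) * det S)))"
    by (simp add: gauss_density_def[abs_def])
  also have "\<dots> \<in> borel_measurable borel"
    by (intro borel_measurable_continuous_onI continuous_intros linear_continuous_on
        matrix_vector_mul_bounded_linear)
  finally show ?thesis .
qed

lemma nn_integral_lborel_prod_vec:
  fixes F :: "'n::finite \<Rightarrow> real \<Rightarrow> ennreal"
  assumes F: "\<And>i. F i \<in> borel_measurable borel"
  shows "(\<integral>\<^sup>+z. (\<Prod>i\<in>UNIV. F i (z$i)) \<partial>lborel) = (\<Prod>i\<in>UNIV. \<integral>\<^sup>+s. F i s \<partial>lborel)"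
proof -
  define f where "f b = F (SOME i. b = axis i 1)" for b :: "real^'n"
  have f_axis: "f (axis i 1) = F i" for i
    unfolding f_def by (rule arg_cong[where f=F]) (auto simp: axis_eq_axis)
  have Basis_eq: "(Basis :: (real^'n) set) = (\<lambda>i. axis i 1) ` UNIV"
    by (auto simp: Basis_vec_def)
  have inj: "inj (\<lambda>i::'n. axis i (1::real))"
    by (auto simp: inj_def axis_eq_axis)
  have "(\<integral>\<^sup>+z. (\<Prod>b\<in>Basis. f b (z \<bullet> b)) \<partial>lborel) = (\<Prod>b\<in>Basis. \<integral>\<^sup>+s. f b s \<partial>lborel)"
    by (rule nn_integral_lborel_prod) (auto simp: Basis_eq f_axis F)
  then show ?thesis
    by (simp add: Basis_eq prod.reindex[OF inj] f_axis inner_axis)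
qed

lemma real_sqrt_prod: "sqrt (prod f A) = (\<Prod>i\<in>A. sqrt (f i))"
  by (induction A rule: infinite_finite_induct) (auto simp: real_sqrt_mult)

lemma min_prod_eq_prod_min:
  fixes a b :: "'i \<Rightarrow> real"
  assumes "finite I" "k \<in> I" and "\<And>i. i \<in> I \<Longrightarrow> i \<noteq> k \<Longrightarrow> a i = b i"
    and "\<And>i. i \<in> I \<Longrightarrow> 0 \<le> a i"
  shows "min (\<Prod>i\<in>I. a i) (\<Prod>i\<in>I. b i) = (\<Prod>i\<in>I. min (a i) (b i))"
proof -
  let ?P = "\<Prod>i\<in>I-{k}. a i"
  have "0 \<le> ?P"
    by (intro prod_nonneg) (simp add: assms(4))
  moreover have "(\<Prod>i\<in>I-{k}. b i) = ?P" "(\<Prod>i\<in>I-{k}. min (a i) (b i)) = ?P"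
    using assms(3) by (auto intro!: prod.cong)
  ultimately show ?thesis
    by (simp add: prod.remove[OF assms(1,2)] min_mult_distrib_right)
qed

lemma nn_integral_min_diagonal_gaussians:
  fixes d :: "'n::finite \<Rightarrow> real"
  assumes d: "\<And>i. 0 < d i"
  shows "(\<integral>\<^sup>+z. ennreal (min (exp (- (\<Sum>i\<in>UNIV. d i * (z$i)\<^sup>2) / 2))
      (exp (- (\<Sum>i\<in>UNIV. d i * ((z + t *\<^sub>R axis k 1)$i)\<^sup>2) / 2))) \<partial>lborel)
    = ennreal (\<Prod>i\<in>UNIV. sqrt (2 * pi) / sqrt (d i)) * normal_overlap (sqrt (d k) * t)"
proof -
  define s where "s i = (if i = k then t else 0)" for i
  define F where "F i x = ennreal (min (exp (- (d i * x\<^sup>2) / 2)) (exp (- (d i * (x + s i)\<^sup>2) / 2)))"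
    for i x
  have exp_sum: "exp (- (\<Sum>i\<in>UNIV. d i * (y i)\<^sup>2) / 2) = (\<Prod>i\<in>UNIV. exp (- (d i * (y i)\<^sup>2) / 2))"
    for y :: "'n \<Rightarrow> real"
    by (simp add: exp_sum[symmetric] sum_negf sum_divide_distrib)
  have shift: "(z + t *\<^sub>R axis k 1)$i = z$i + s i" for z :: "real^'n" and i
    by (simp add: s_def axis_def)
  have "ennreal (min (exp (- (\<Sum>i\<in>UNIV. d i * (z$i)\<^sup>2) / 2))
      (exp (- (\<Sum>i\<in>UNIV. d i * ((z + t *\<^sub>R axis k 1)$i)\<^sup>2) / 2))) = (\<Prod>i\<in>UNIV. F i (z$i))" for z
    unfolding shift exp_sum F_def
    by (subst min_prod_eq_prod_min) (auto simp: s_def prod_ennreal)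
  then have "(\<integral>\<^sup>+z. ennreal (min (exp (- (\<Sum>i\<in>UNIV. d i * (z$i)\<^sup>2) / 2))
      (exp (- (\<Sum>i\<in>UNIV. d i * ((z + t *\<^sub>R axis k 1)$i)\<^sup>2) / 2))) \<partial>lborel)
      = (\<integral>\<^sup>+z. (\<Prod>i\<in>UNIV. F i (z$i)) \<partial>lborel)"
    by (simp only:)
  also have "\<dots> = (\<Prod>i\<in>UNIV. \<integral>\<^sup>+x. F i x \<partial>lborel)"
    by (rule nn_integral_lborel_prod_vec) (unfold F_def, measurable)
  also have "\<dots> = (\<Prod>i\<in>UNIV. ennreal (sqrt (2 * pi) / sqrt (d i)) * normal_overlap (sqrt (d i) * s i))"
    by (intro prod.cong refl) (simp only: F_def nn_integral_min_exp_quadratic[OF d])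
  also have "\<dots> = ennreal (\<Prod>i\<in>UNIV. sqrt (2 * pi) / sqrt (d i)) * normal_overlap (sqrt (d k) * t)"
  proof -
    have "(\<Prod>i\<in>UNIV. normal_overlap (sqrt (d i) * s i)) = normal_overlap (sqrt (d k) * t)"
      by (subst prod.remove[of UNIV k]) (auto simp: s_def normal_overlap_0 intro!: prod.neutral)
    moreover have "(\<Prod>i\<in>UNIV. ennreal (sqrt (2 * pi) / sqrt (d i)))
        = ennreal (\<Prod>i\<in>UNIV. sqrt (2 * pi) / sqrt (d i))"
      using d by (intro prod_ennreal) (simp add: less_imp_le)
    ultimately show ?thesis
      by (simp only: prod.distrib)
  qed
  finally show ?thesis .
qed

lemma gauss_density_diagonalized:
  fixes S T :: "real^'n::finite^'n" and d :: "'n \<Rightarrow> real"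
  assumes S: "pos_def S" and d: "\<And>i. 0 < d i" and det_M: "det (matrix_inv S) = (\<Prod>i\<in>UNIV. d i)"
    and quad: "\<And>z. (T *v z) \<bullet> (matrix_inv S *v (T *v z)) = (\<Sum>i\<in>UNIV. d i * (z$i)\<^sup>2)"
  shows "gauss_density S (T *v y)
    = exp (- (\<Sum>i\<in>UNIV. d i * (y$i)\<^sup>2) / 2) / (\<Prod>i\<in>UNIV. sqrt (2 * pi) / sqrt (d i))"
proof -
  have prod_d: "0 < (\<Prod>i\<in>UNIV. d i)"
    using d by (simp add: prod_pos)
  moreover have "det S * (\<Prod>i\<in>UNIV. d i) = 1"
    using det_matrix_inv[OF pos_def_invertible[OF S]] det_M by simp
  ultimately have "det S = 1 / (\<Prod>i\<in>UNIV. d i)"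
    by (metis nonzero_eq_divide_eq less_irrefl)
  with prod_d have "sqrt ((2 * pi) ^ CARD('n) * det S) = (\<Prod>i\<in>UNIV. sqrt (2 * pi) / sqrt (d i))"
    by (simp add: prod_dividef real_sqrt_prod[symmetric] real_sqrt_mult real_sqrt_power
        real_sqrt_divide power_mult_distrib)
  then show ?thesis
    by (simp add: gauss_density_def quad)
qed

lemma nn_integral_min_gauss_density:
  fixes S :: "real^'n::finite^'n" and \<gamma> :: "real^'n"
  assumes S: "pos_def S"
  shows "(\<integral>\<^sup>+w. ennreal (min (gauss_density S w) (gauss_density S (w + \<gamma>))) \<partial>lborel)
    = normal_overlap (sqrt (\<gamma> \<bullet> (matrix_inv S *v \<gamma>)))"
proof -
  have M: "pos_def (matrix_inv S)"
    using S by (rule pos_def_matrix_inv)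
  obtain T d t k where T: "lborel_preserving T" and d: "\<And>i. 0 < d i"
    and det_M: "det (matrix_inv S) = (\<Prod>i\<in>UNIV. d i)"
    and quad: "\<And>z. (T *v z) \<bullet> (matrix_inv S *v (T *v z)) = (\<Sum>i\<in>UNIV. d i * (z$i)\<^sup>2)"
    and T_axis: "T *v (t *\<^sub>R axis k 1) = \<gamma>"
    by (rule exists_lborel_preserving_diagonalization[OF M, where \<gamma>=\<gamma>]) blast
  define Z where "Z = (\<Prod>i\<in>UNIV. sqrt (2 * pi) / sqrt (d i))"
  have "0 < Z"
    using d by (simp add: Z_def prod_pos)
  have gauss_T: "gauss_density S (T *v y) = exp (- (\<Sum>i\<in>UNIV. d i * (y$i)\<^sup>2) / 2) / Z" for y
    unfolding Z_def by (rule gauss_density_diagonalized[OF S d det_M quad])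
  have "T *v z + \<gamma> = T *v (z + t *\<^sub>R axis k 1)" for z
    by (simp add: T_axis matrix_vector_right_distrib)
  then have "(\<integral>\<^sup>+w. ennreal (min (gauss_density S w) (gauss_density S (w + \<gamma>))) \<partial>lborel)
      = (\<integral>\<^sup>+z. ennreal (1 / Z) * ennreal (min (exp (- (\<Sum>i\<in>UNIV. d i * (z$i)\<^sup>2) / 2))
          (exp (- (\<Sum>i\<in>UNIV. d i * ((z + t *\<^sub>R axis k 1)$i)\<^sup>2) / 2))) \<partial>lborel)"
    using nn_integral_lborel_preserving[OF T, of "\<lambda>w. ennreal (min (gauss_density S w) (gauss_density S (w + \<gamma>)))"]
      \<open>0 < Z\<close>
    by (simp add: gauss_T min_divide_distrib_right ennreal_mult[symmetric])
  also have "\<dots> = ennreal (1 / Z) * (ennreal Z * normal_overlap (sqrt (d k) * t))"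
  proof -
    have "(\<integral>\<^sup>+z. ennreal (min (exp (- (\<Sum>i\<in>UNIV. d i * (z$i)\<^sup>2) / 2))
        (exp (- (\<Sum>i\<in>UNIV. d i * ((z + t *\<^sub>R axis k 1)$i)\<^sup>2) / 2))) \<partial>lborel)
        = ennreal Z * normal_overlap (sqrt (d k) * t)"
      unfolding Z_def by (rule nn_integral_min_diagonal_gaussians[OF d])
    then show ?thesis
      by (simp add: nn_integral_cmult)
  qed
  also have "\<dots> = normal_overlap (sqrt (d k) * t)"
    using \<open>0 < Z\<close> by (simp add: ennreal_mult[symmetric] mult.assoc[symmetric])
  also have "\<dots> = normal_overlap (sqrt (\<gamma> \<bullet> (matrix_inv S *v \<gamma>)))"
  proof -
    have "\<gamma> \<bullet> (matrix_inv S *v \<gamma>) = (\<Sum>i\<in>UNIV. d i * ((t *\<^sub>R axis k 1)$i)\<^sup>2)"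
      using quad[of "t *\<^sub>R axis k 1"] by (simp only: T_axis)
    also have "\<dots> = (\<Sum>i\<in>UNIV. if i = k then d k * t\<^sup>2 else 0)"
      by (rule sum.cong) (auto simp: axis_def)
    finally have "sqrt (\<gamma> \<bullet> (matrix_inv S *v \<gamma>)) = \<bar>sqrt (d k) * t\<bar>"
      using d[of k] by (simp add: real_sqrt_mult abs_mult)
    then show ?thesis
      by (cases "0 \<le> sqrt (d k) * t") (simp_all add: normal_overlap_minus)
  qed
  finally show ?thesis .
qed

lemma nn_integral_gauss_density:
  fixes S :: "real^'n::finite^'n"
  assumes "pos_def S"
  shows "(\<integral>\<^sup>+w. ennreal (gauss_density S w) \<partial>lborel) = 1"
  using nn_integral_min_gauss_density[OF assms, of 0] by (simp add: normal_overlap_0)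

definition diagonal_coupling :: "real^'n::finite^'n \<Rightarrow> real^'n \<Rightarrow> real^'n
    \<Rightarrow> ((real^'n) \<times> (real^'n)) set \<Rightarrow> ennreal" where
  "diagonal_coupling S \<gamma> c A = (\<integral>\<^sup>+w. indicator A (c + w, c + w)
     * ennreal (min (gauss_density S w) (gauss_density S (w + \<gamma>))) \<partial>lborel)"

lemma transpose_diff: "transpose (A - B) = transpose A - transpose B"
  by (simp add: transpose_def vec_eq_iff)

lemma sub_kernel_eq_diagonal_coupling:
  "sub_kernel S f thh th x x u
     = diagonal_coupling S (transpose (th - thh) *v f x u) (transpose th *v f x u)"
proof -
  have "transpose thh *v f x u + transpose (th - thh) *v f x u = transpose th *v f x u"
    by (simp only: transpose_diff matrix_vector_mult_diff_rdistrib) simp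
  then show ?thesis
    by (simp add: fun_eq_iff sub_kernel_def diagonal_coupling_def Let_def
        del: transpose_matrix_vector)
qed

lemma sets_gauss [simp, measurable_cong]: "sets (gauss \<mu> S) = sets borel"
  by (simp add: gauss_def)

lemma nn_integral_gauss:
  assumes "g \<in> borel_measurable borel"
  shows "(\<integral>\<^sup>+x. g x \<partial>gauss \<mu> S)
    = (\<integral>\<^sup>+w. ennreal (gauss_density S (c + w - \<mu>)) * g (c + w) \<partial>lborel)"
proof -
  have "(\<integral>\<^sup>+x. g x \<partial>gauss \<mu> S) = (\<integral>\<^sup>+x. ennreal (gauss_density S (x - \<mu>)) * g x \<partial>lborel)"
    using assms unfolding gauss_def by (subst nn_integral_density) auto
  also have "\<dots> = (\<integral>\<^sup>+x. ennreal (gauss_density S (x - \<mu>)) * g x \<partial>distr lborel borel ((+) c))"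
    by (simp add: lborel_distr_plus)
  also have "\<dots> = (\<integral>\<^sup>+w. ennreal (gauss_density S (c + w - \<mu>)) * g (c + w) \<partial>lborel)"
    using assms by (subst nn_integral_distr) auto
  finally show ?thesis .
qed

lemma measure_space_diagonal_coupling:
  fixes S :: "real^'n::finite^'n"
  shows "measure_space UNIV (sets borel) (diagonal_coupling S \<gamma> c)"
proof -
  define \<rho> where "\<rho> w = ennreal (min (gauss_density S w) (gauss_density S (w + \<gamma>)))" for w
  define D where "D = distr (density lborel \<rho>) borel (\<lambda>w. (c + w, c + w))"
  have diag [measurable]: "(\<lambda>w. (c + w, c + w)) \<in> borel \<rightarrow>\<^sub>M (borel :: ((real^'n) \<times> (real^'n)) measure)"
    by (intro borel_measurable_continuous_onI continuous_intros)
  have "diagonal_coupling S \<gamma> c A = emeasure D A" if [measurable]: "A \<in> sets borel" for A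
  proof -
    have "emeasure D A = emeasure (density lborel \<rho>) ((\<lambda>w. (c + w, c + w)) -` A)"
      by (simp add: D_def emeasure_distr)
    also have "\<dots> = (\<integral>\<^sup>+w. \<rho> w * indicator ((\<lambda>w. (c + w, c + w)) -` A) w \<partial>lborel)"
      unfolding \<rho>_def using measurable_sets[OF diag that]
      by (intro emeasure_density) simp_all
    finally show ?thesis
      by (simp add: diagonal_coupling_def \<rho>_def indicator_def mult.commute)
  qed
  moreover have "measure_space UNIV (sets borel) (emeasure D)"
    using measure_space[of D] by (simp add: D_def)
  ultimately show ?thesis
    unfolding measure_space_def positive_def countably_additive_def
    by (auto simp: subset_eq)
qed

lemma diagonal_coupling_sim_rel: "diagonal_coupling S \<gamma> c sim_rel = diagonal_coupling S \<gamma> c UNIV"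
  by (simp add: diagonal_coupling_def sim_rel_def)

lemma diagonal_coupling_UNIV:
  assumes "pos_def S"
  shows "diagonal_coupling S \<gamma> c UNIV = normal_overlap (sqrt (\<gamma> \<bullet> (matrix_inv S *v \<gamma>)))"
  by (simp add: diagonal_coupling_def nn_integral_min_gauss_density[OF assms])

lemma diagonal_coupling_le_1:
  assumes "pos_def S"
  shows "diagonal_coupling S \<gamma> c UNIV \<le> 1"
proof -
  have "diagonal_coupling S \<gamma> c UNIV \<le> (\<integral>\<^sup>+w. ennreal (gauss_density S w) \<partial>lborel)"
    unfolding diagonal_coupling_def by (intro nn_integral_mono) (auto intro!: ennreal_leI)
  with assms show ?thesis
    by (simp add: nn_integral_gauss_density)
qed

lemma diagonal_coupling_fst_le:
  assumes [measurable]: "A \<in> sets borel"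
  shows "diagonal_coupling S \<gamma> c (A \<times> UNIV) \<le> emeasure (gauss (c - \<gamma>) S) A"
proof -
  have "diagonal_coupling S \<gamma> c (A \<times> UNIV)
      \<le> (\<integral>\<^sup>+w. ennreal (gauss_density S (c + w - (c - \<gamma>))) * indicator A (c + w) \<partial>lborel)"
    unfolding diagonal_coupling_def
    by (intro nn_integral_mono) (auto simp: indicator_def algebra_simps intro!: ennreal_leI)
  also have "\<dots> = emeasure (gauss (c - \<gamma>) S) A"
    using nn_integral_gauss[of "indicator A" "c - \<gamma>" S c] by simp
  finally show ?thesis .
qed

lemma diagonal_coupling_snd_le:
  assumes [measurable]: "B \<in> sets borel"
  shows "diagonal_coupling S \<gamma> c (UNIV \<times> B) \<le> emeasure (gauss c S) B"
proof -
  have "diagonal_coupling S \<gamma> c (UNIV \<times> B)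
      \<le> (\<integral>\<^sup>+w. ennreal (gauss_density S (c + w - c)) * indicator B (c + w) \<partial>lborel)"
    unfolding diagonal_coupling_def
    by (intro nn_integral_mono) (auto simp: indicator_def intro!: ennreal_leI)
  also have "\<dots> = emeasure (gauss c S) B"
    using nn_integral_gauss[of "indicator B" c S c] by simp
  finally show ?thesis .
qed

lemma diagonal_coupling_le_nn_integral_gauss:
  assumes [measurable]: "A \<in> sets borel"
  shows "diagonal_coupling S \<gamma> c A \<le> (\<integral>\<^sup>+x. indicator A (x, x) \<partial>gauss c S)"
proof -
  have [measurable]: "(\<lambda>x. (x, x)) \<in> borel \<rightarrow>\<^sub>M (borel :: ((real^'n) \<times> (real^'n)) measure)"
    by (intro borel_measurable_continuous_onI continuous_intros)
  have "diagonal_coupling S \<gamma> c A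
      \<le> (\<integral>\<^sup>+w. ennreal (gauss_density S (c + w - c)) * indicator A (c + w, c + w) \<partial>lborel)"
    unfolding diagonal_coupling_def
    by (intro nn_integral_mono) (auto simp: indicator_def intro!: ennreal_leI)
  also have "\<dots> = (\<integral>\<^sup>+x. indicator A (x, x) \<partial>gauss c S)"
    by (rule nn_integral_gauss[symmetric]) measurable
  finally show ?thesis .
qed

section \<open>The credible set bounds the model mismatch\<close>

lemma sum_UNIV_prod:
  fixes g :: "('a::finite \<times> 'b::finite) \<Rightarrow> real"
  shows "(\<Sum>p\<in>UNIV. g p) = (\<Sum>j\<in>UNIV. \<Sum>i\<in>UNIV. g (j, i))"
  by (simp add: sum.cartesian_product)

lemma quadratic_form_kron_PhiTPhi:
  fixes M :: "real^'n::finite^'n" and x :: "real^('n \<times> 'm::finite)" and f :: "'x \<Rightarrow> 'u \<Rightarrow> real^'m"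
  shows "x \<bullet> (kron M (PhiTPhi f N xs us) *v x) =
    (\<Sum>l<N. (\<chi> j. \<Sum>i\<in>UNIV. x$(j,i) * f (xs l) (us l) $ i)
      \<bullet> (M *v (\<chi> j. \<Sum>i\<in>UNIV. x$(j,i) * f (xs l) (us l) $ i)))"
proof -
  define \<phi> where "\<phi> l = f (xs l) (us l)" for l
  have "x \<bullet> (kron M (PhiTPhi f N xs us) *v x) =
      (\<Sum>p\<in>UNIV. \<Sum>q\<in>UNIV. \<Sum>l<N. x$p * (M$fst p$fst q * (\<phi> l$snd p * \<phi> l$snd q) * x$q))"
    by (simp add: inner_vec_def matrix_vector_mult_def kron_def PhiTPhi_def \<phi>_def
        sum_distrib_left sum_distrib_right)
  also have "\<dots> = (\<Sum>p\<in>UNIV. \<Sum>l<N. \<Sum>q\<in>UNIV. x$p * (M$fst p$fst q * (\<phi> l$snd p * \<phi> l$snd q) * x$q))"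
    by (intro sum.cong refl sum.swap)
  also have "\<dots> = (\<Sum>l<N. \<Sum>p\<in>UNIV. \<Sum>q\<in>UNIV. x$p * (M$fst p$fst q * (\<phi> l$snd p * \<phi> l$snd q) * x$q))"
    by (rule sum.swap)
  also have "\<dots> = (\<Sum>l<N. (\<chi> j. \<Sum>i\<in>UNIV. x$(j,i) * \<phi> l $ i) \<bullet> (M *v (\<chi> j. \<Sum>i\<in>UNIV. x$(j,i) * \<phi> l $ i)))"
  proof (rule sum.cong[OF refl])
    fix l
    have "(\<Sum>p\<in>UNIV. \<Sum>q\<in>UNIV. x$p * (M$fst p$fst q * (\<phi> l$snd p * \<phi> l$snd q) * x$q)) =
        (\<Sum>j\<in>UNIV. \<Sum>i\<in>UNIV. \<Sum>j'\<in>UNIV. \<Sum>i'\<in>UNIV. x$(j,i) * (M$j$j' * (\<phi> l$i * \<phi> l$i') * x$(j',i')))"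
      by (simp only: sum_UNIV_prod fst_conv snd_conv)
    also have "\<dots> = (\<Sum>j\<in>UNIV. \<Sum>j'\<in>UNIV. \<Sum>i'\<in>UNIV. \<Sum>i\<in>UNIV.
        (x$(j,i) * \<phi> l $ i) * (M$j$j' * (x$(j',i') * \<phi> l $ i')))"
    proof (intro sum.cong refl)
      fix j
      have "(\<Sum>i\<in>UNIV. \<Sum>j'\<in>UNIV. \<Sum>i'\<in>UNIV. x$(j,i) * (M$j$j' * (\<phi> l$i * \<phi> l$i') * x$(j',i')))
          = (\<Sum>j'\<in>UNIV. \<Sum>i\<in>UNIV. \<Sum>i'\<in>UNIV. x$(j,i) * (M$j$j' * (\<phi> l$i * \<phi> l$i') * x$(j',i')))"
        by (rule sum.swap)
      also have "\<dots> = (\<Sum>j'\<in>UNIV. \<Sum>i'\<in>UNIV. \<Sum>i\<in>UNIV. x$(j,i) * (M$j$j' * (\<phi> l$i * \<phi> l$i') * x$(j',i')))"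
        by (intro sum.cong refl sum.swap)
      finally show "(\<Sum>i\<in>UNIV. \<Sum>j'\<in>UNIV. \<Sum>i'\<in>UNIV. x$(j,i) * (M$j$j' * (\<phi> l$i * \<phi> l$i') * x$(j',i')))
          = (\<Sum>j'\<in>UNIV. \<Sum>i'\<in>UNIV. \<Sum>i\<in>UNIV. (x$(j,i) * \<phi> l $ i) * (M$j$j' * (x$(j',i') * \<phi> l $ i')))"
        by (simp only: mult_ac)
    qed
    also have "\<dots> = (\<chi> j. \<Sum>i\<in>UNIV. x$(j,i) * \<phi> l $ i) \<bullet> (M *v (\<chi> j. \<Sum>i\<in>UNIV. x$(j,i) * \<phi> l $ i))"
      by (simp add: inner_vec_def matrix_vector_mult_def sum_distrib_left sum_distrib_right)
    finally show "(\<Sum>p\<in>UNIV. \<Sum>q\<in>UNIV. x$p * (M$fst p$fst q * (\<phi> l$snd p * \<phi> l$snd q) * x$q)) =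
      (\<chi> j. \<Sum>i\<in>UNIV. x$(j,i) * \<phi> l $ i) \<bullet> (M *v (\<chi> j. \<Sum>i\<in>UNIV. x$(j,i) * \<phi> l $ i))" .
  qed
  finally show ?thesis
    by (simp add: \<phi>_def)
qed

lemma pos_def_blr_SigmaN_inv:
  fixes S :: "real^'n::finite^'n" and S0 :: "real^('n \<times> 'm::finite)^('n \<times> 'm)"
    and f :: "'x \<Rightarrow> 'u \<Rightarrow> real^'m"
  assumes S: "pos_def S" and S0: "pos_def S0"
  shows "pos_def (blr_SigmaN_inv S S0 f N xs us)"
  unfolding pos_def_def
proof (intro conjI allI impI)
  have M: "pos_def (matrix_inv S)" and M0: "pos_def (matrix_inv S0)"
    using S S0 by (simp_all add: pos_def_matrix_inv)
  have sym: "A $ a $ b = A $ b $ a" if "pos_def A" for A :: "real^'k::finite^'k" and a b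
    using that unfolding pos_def_def by (metis transpose_def vec_lambda_beta)
  show "transpose (blr_SigmaN_inv S S0 f N xs us) = blr_SigmaN_inv S S0 f N xs us"
    unfolding blr_SigmaN_inv_def using sym[OF M] sym[OF M0]
    by (simp add: vec_eq_iff transpose_def kron_def PhiTPhi_def mult.commute)
  fix x :: "real^('n \<times> 'm)" assume "x \<noteq> 0"
  with M0 have "0 < x \<bullet> (matrix_inv S0 *v x)"
    by (simp add: pos_def_def)
  moreover have "0 \<le> x \<bullet> (kron (matrix_inv S) (PhiTPhi f N xs us) *v x)"
    unfolding quadratic_form_kron_PhiTPhi by (intro sum_nonneg pos_def_nonneg[OF M])
  ultimately show "0 < x \<bullet> (blr_SigmaN_inv S S0 f N xs us *v x)"
    unfolding blr_SigmaN_inv_def by (simp add: matrix_vector_mult_add_rdistrib inner_add_right)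
qed

lemma pos_def_cauchy_schwarz:
  fixes A :: "real^'n::finite^'n"
  assumes A: "pos_def A"
  shows "(x \<bullet> (A *v y))\<^sup>2 \<le> (x \<bullet> (A *v x)) * (y \<bullet> (A *v y))"
proof (cases "y = 0")
  case True
  then show ?thesis by simp
next
  case False
  define a where "a = x \<bullet> (A *v y)"
  define b where "b = y \<bullet> (A *v y)"
  have b: "0 < b"
    using A False unfolding b_def pos_def_def by blast
  have yx: "y \<bullet> (A *v x) = a"
    using A unfolding a_def pos_def_def by (metis symmetric_matrix_inner_commute)
  define t where "t = - a / b"
  have "0 \<le> (x + t *\<^sub>R y) \<bullet> (A *v (x + t *\<^sub>R y))"
    using A by (rule pos_def_nonneg)
  also have "\<dots> = x \<bullet> (A *v x) + 2 * t * a + t\<^sup>2 * b"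
    by (simp add: a_def[symmetric] b_def[symmetric] yx power2_eq_square algebra_simps)
  also have "\<dots> = x \<bullet> (A *v x) - a\<^sup>2 / b"
    using b by (simp add: t_def power2_eq_square field_simps)
  finally show ?thesis
    using b by (simp add: a_def[symmetric] b_def[symmetric] divide_le_eq)
qed

lemma quadratic_form_le_onorm:
  fixes M :: "real^'n::finite^'n"
  shows "g \<bullet> (M *v g) \<le> onorm (\<lambda>x. M *v x) * (norm g)\<^sup>2"
proof -
  have "g \<bullet> (M *v g) \<le> norm g * norm (M *v g)"
    by (rule real_inner_class.Cauchy_Schwarz_ineq2[THEN abs_le_D1])
  also have "\<dots> \<le> norm g * (onorm (\<lambda>x. M *v x) * norm g)"
    by (intro mult_left_mono onorm matrix_vector_mul_bounded_linear) simp
  finally show ?thesis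
    by (simp add: power2_eq_square algebra_simps)
qed

text \<open>With \<open>y = A\<inverse> d\<close>, Cauchy--Schwarz for the form of \<open>A\<close> gives
  \<open>\<parallel>d\<parallel>\<^sup>4 = (d \<bullet> A y)\<^sup>2 \<le> (d \<bullet> A d) (d \<bullet> A\<inverse> d)\<close>.\<close>
lemma norm_squared_le_onorm_matrix_inv:
  fixes A :: "real^'n::finite^'n"
  assumes A: "pos_def A"
  shows "(norm d)\<^sup>2 \<le> onorm (\<lambda>x. matrix_inv A *v x) * (d \<bullet> (A *v d))"
proof (cases "d = 0")
  case True
  then show ?thesis by simp
next
  case False
  let ?o = "onorm (\<lambda>x. matrix_inv A *v x)"
  define y where "y = matrix_inv A *v d"
  have Ay: "A *v y = d"
    unfolding y_def using matrix_inv_right[OF pos_def_invertible[OF A]]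
    by (simp add: matrix_vector_mul_assoc)
  have cs: "((norm d)\<^sup>2)\<^sup>2 \<le> (d \<bullet> (A *v d)) * (y \<bullet> (A *v y))"
    using pos_def_cauchy_schwarz[OF A, of d y] by (simp add: Ay power2_norm_eq_inner)
  have "y \<bullet> (A *v y) = d \<bullet> (matrix_inv A *v d)"
    unfolding Ay by (simp add: y_def inner_commute)
  also have "\<dots> \<le> ?o * (norm d)\<^sup>2"
    by (rule quadratic_form_le_onorm)
  finally have "((norm d)\<^sup>2)\<^sup>2 \<le> (d \<bullet> (A *v d)) * (?o * (norm d)\<^sup>2)"
    using cs pos_def_nonneg[OF A, of d] by (meson mult_left_mono order_trans)
  then have "(norm d)\<^sup>2 * (norm d)\<^sup>2 \<le> (?o * (d \<bullet> (A *v d))) * (norm d)\<^sup>2"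
    by (simp add: power2_eq_square mult_ac)
  moreover have "0 < (norm d)\<^sup>2"
    using False by simp
  ultimately show ?thesis
    by (rule mult_right_le_imp_le)
qed

lemma norm_transpose_mult_vector_le:
  fixes X :: "real^'n::finite^'m::finite" and v :: "real^'m"
  shows "(norm (transpose X *v v))\<^sup>2 \<le> (norm (vec_theta X))\<^sup>2 * (norm v)\<^sup>2"
proof -
  have "(transpose X *v v) $ j = (\<Sum>i\<in>UNIV. X$i$j * v$i)" for j
    by (simp add: matrix_vector_mult_def transpose_def del: transpose_matrix_vector)
  then have "(norm (transpose X *v v))\<^sup>2 = (\<Sum>j\<in>UNIV. (\<Sum>i\<in>UNIV. X$i$j * v$i)\<^sup>2)"
    unfolding power2_norm_eq_inner by (simp add: inner_vec_def power2_eq_square del: transpose_matrix_vector)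
  also have "\<dots> \<le> (\<Sum>j\<in>UNIV. (\<Sum>i\<in>UNIV. (X$i$j)\<^sup>2) * (\<Sum>i\<in>UNIV. (v$i)\<^sup>2))"
    by (intro sum_mono Cauchy_Schwarz_ineq_sum)
  also have "\<dots> = (\<Sum>j\<in>UNIV. \<Sum>i\<in>UNIV. (X$i$j)\<^sup>2) * (\<Sum>i\<in>UNIV. (v$i)\<^sup>2)"
    by (simp add: sum_distrib_right)
  also have "(\<Sum>j\<in>UNIV. \<Sum>i\<in>UNIV. (X$i$j)\<^sup>2) = (norm (vec_theta X))\<^sup>2"
    unfolding power2_norm_eq_inner
    by (simp add: inner_vec_def sum_UNIV_prod vec_theta_def power2_eq_square)
  also have "(\<Sum>i\<in>UNIV. (v$i)\<^sup>2) = (norm v)\<^sup>2"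
    unfolding power2_norm_eq_inner by (simp add: inner_vec_def power2_eq_square)
  finally show ?thesis .
qed

lemma vec_theta_unvec_theta: "vec_theta (unvec_theta v) = v"
  by (simp add: vec_theta_def unvec_theta_def vec_eq_iff)

lemma vec_theta_diff: "vec_theta (a - b) = vec_theta a - vec_theta b"
  by (simp add: vec_theta_def vec_eq_iff)

text \<open>\<open>0 \<le> r\<close> needs \<open>0 \<le> chi2_quantile CARD('n) (1 - \<alpha>)\<close>, which holds only because
  the credible set contains \<open>th\<close>.\<close>
lemma credible_set_bound:
  fixes S :: "real^'n::finite^'n" and S0 :: "real^('n \<times> 'm::finite)^('n \<times> 'm)"
    and f :: "'x \<Rightarrow> 'u \<Rightarrow> real^'m" and v :: "real^'m"
  assumes S: "pos_def S" and S0: "pos_def S0"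
    and th: "th \<in> credible_set S S0 mu0 f N xs us xps \<alpha>"
  defines "r \<equiv> onorm (\<lambda>x. matrix_inv S *v x) * onorm (\<lambda>x. blr_SigmaN S S0 f N xs us *v x)
      * real CARD('n) * chi2_quantile CARD('n) (1 - \<alpha>)"
  shows "(transpose (th - blr_estimate S S0 mu0 f N xs us xps) *v v) \<bullet>
           (matrix_inv S *v (transpose (th - blr_estimate S S0 mu0 f N xs us xps) *v v))
         \<le> r * (norm v)\<^sup>2"
    and "0 \<le> r"
proof -
  let ?A = "blr_SigmaN_inv S S0 f N xs us"
  let ?oM = "onorm (\<lambda>x. matrix_inv S *v x)"
  let ?oN = "onorm (\<lambda>x. blr_SigmaN S S0 f N xs us *v x)"
  let ?q = "real CARD('n) * chi2_quantile CARD('n) (1 - \<alpha>)"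
  define d where "d = vec_theta th - blr_muN S S0 mu0 f N xs us xps"
  define \<gamma> where "\<gamma> = transpose (th - blr_estimate S S0 mu0 f N xs us xps) *v v"
  have A: "pos_def ?A"
    using S S0 by (rule pos_def_blr_SigmaN_inv)
  have cred: "d \<bullet> (?A *v d) \<le> ?q"
    using th unfolding credible_set_def d_def by (simp add: Let_def)
  have oM: "0 \<le> ?oM" and oN: "0 \<le> ?oN"
    by (intro onorm_pos_le matrix_vector_mul_bounded_linear)+
  have "(norm \<gamma>)\<^sup>2 \<le> (norm d)\<^sup>2 * (norm v)\<^sup>2"
    using norm_transpose_mult_vector_le[of "th - blr_estimate S S0 mu0 f N xs us xps" v]
    by (simp add: \<gamma>_def d_def blr_estimate_def vec_theta_diff vec_theta_unvec_theta
        del: transpose_matrix_vector)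
  moreover have "(norm d)\<^sup>2 \<le> ?oN * (d \<bullet> (?A *v d))"
    using norm_squared_le_onorm_matrix_inv[OF A, of d] by (simp add: blr_SigmaN_def)
  moreover note quadratic_form_le_onorm[of \<gamma> "matrix_inv S"]
  ultimately have "\<gamma> \<bullet> (matrix_inv S *v \<gamma>) \<le> ?oM * ((?oN * (d \<bullet> (?A *v d))) * (norm v)\<^sup>2)"
    using oM by (meson mult_left_mono mult_right_mono order_trans zero_le_power2)
  also have "\<dots> \<le> ?oM * ((?oN * ?q) * (norm v)\<^sup>2)"
    using cred oM oN by (intro mult_left_mono mult_right_mono) simp_all
  finally show "\<gamma> \<bullet> (matrix_inv S *v \<gamma>) \<le> r * (norm v)\<^sup>2"
    by (simp add: r_def mult.assoc)
  show "0 \<le> r"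
    using oM oN cred pos_def_nonneg[OF A, of d] by (simp add: r_def mult.assoc)
qed

lemma ball_sim_rel [simp]: "(\<forall>(a, b) \<in> sim_rel. P a b) \<longleftrightarrow> (\<forall>a. P a a)"
  by (auto simp: sim_rel_def)

lemma diag_in_sim_rel [simp]: "(a, a) \<in> sim_rel"
  by (simp add: sim_rel_def)

lemma sub_kernel_simulation:
  fixes S :: "real^'n::finite^'n" and f :: "real^'n \<Rightarrow> 'u \<Rightarrow> real^'m::finite"
    and th thh :: "real^'n^'m" and x :: "real^'n" and u :: 'u
  assumes S: "pos_def S"
    and bound: "\<And>y. (transpose (th - thh) *v y) \<bullet> (matrix_inv S *v (transpose (th - thh) *v y))
      \<le> r * (norm y)\<^sup>2"
    and "0 \<le> r"
  defines "v \<equiv> sub_kernel S f thh th x x u"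
  shows "measure_space UNIV (sets borel) v"
    and "v UNIV \<le> 1"
    and "v UNIV = v sim_rel"
    and "ennreal (2 * std_normal_cdf (- (sqrt r / 2) * norm (f x u))) \<le> v sim_rel"
    and "A \<in> sets borel \<Longrightarrow> v (A \<times> UNIV) \<le> emeasure (gauss (transpose thh *v f x u) S) A"
    and "B \<in> sets borel \<Longrightarrow> v (UNIV \<times> B) \<le> emeasure (gauss (transpose th *v f x u) S) B"
    and "C \<in> sets borel \<Longrightarrow> v C \<le> (\<integral>\<^sup>+xp. indicator C (xp, xp) \<partial>gauss (transpose th *v f x u) S)"
proof -
  define \<gamma> where "\<gamma> = transpose (th - thh) *v f x u"
  define c where "c = transpose th *v f x u"
  have v: "v = diagonal_coupling S \<gamma> c"
    by (simp add: v_def \<gamma>_def c_def sub_kernel_eq_diagonal_coupling del: transpose_matrix_vector)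
  have "c - \<gamma> = transpose thh *v f x u"
    by (simp add: c_def \<gamma>_def transpose_diff matrix_vector_mult_diff_rdistrib
        del: transpose_matrix_vector)
  then show "A \<in> sets borel \<Longrightarrow> v (A \<times> UNIV) \<le> emeasure (gauss (transpose thh *v f x u) S) A"
    unfolding v using diagonal_coupling_fst_le by metis
  show "measure_space UNIV (sets borel) v"
    unfolding v by (rule measure_space_diagonal_coupling)
  show "v UNIV \<le> 1"
    unfolding v using S by (rule diagonal_coupling_le_1)
  show "v UNIV = v sim_rel"
    unfolding v by (rule diagonal_coupling_sim_rel[symmetric])
  show "B \<in> sets borel \<Longrightarrow> v (UNIV \<times> B) \<le> emeasure (gauss (transpose th *v f x u) S) B"
    unfolding v c_def by (rule diagonal_coupling_snd_le)
  show "C \<in> sets borel \<Longrightarrow> v C \<le> (\<integral>\<^sup>+xp. indicator C (xp, xp) \<partial>gauss (transpose th *v f x u) S)"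
    unfolding v c_def by (rule diagonal_coupling_le_nn_integral_gauss)
  have "0 \<le> \<gamma> \<bullet> (matrix_inv S *v \<gamma>)"
    using S by (simp add: pos_def_nonneg pos_def_matrix_inv)
  moreover have "sqrt (\<gamma> \<bullet> (matrix_inv S *v \<gamma>)) \<le> sqrt (r * (norm (f x u))\<^sup>2)"
    using bound by (simp add: \<gamma>_def del: transpose_matrix_vector)
  ultimately have "std_normal_cdf (- (sqrt r / 2) * norm (f x u))
      \<le> std_normal_cdf (- sqrt (\<gamma> \<bullet> (matrix_inv S *v \<gamma>)) / 2)"
    using \<open>0 \<le> r\<close> by (intro std_normal_cdf_mono) (simp add: real_sqrt_mult)
  then show "ennreal (2 * std_normal_cdf (- (sqrt r / 2) * norm (f x u))) \<le> v sim_rel"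
    using S \<open>0 \<le> \<gamma> \<bullet> (matrix_inv S *v \<gamma>)\<close>
    by (simp add: v diagonal_coupling_sim_rel diagonal_coupling_UNIV normal_overlap_eq ennreal_leI)
qed

theorem theorem5:
  fixes f :: "real^'n \<Rightarrow> 'u \<Rightarrow> real^'m" and h :: "real^'n \<Rightarrow> 'y"
    and U :: "'u measure" and Y :: "'y measure"
    and S :: "real^'n^'n"
    and S0 :: "real^('n \<times> 'm)^('n \<times> 'm)" and mu0 :: "real^('n \<times> 'm)"
    and N :: nat and xs :: "nat \<Rightarrow> real^'n" and us :: "nat \<Rightarrow> 'u" and xps :: "nat \<Rightarrow> real^'n"
    and \<alpha> :: real and x0 :: "real^'n"
  assumes f_meas: "(\<lambda>(x, u). f x u) \<in> borel \<Otimes>\<^sub>M U \<rightarrow>\<^sub>M borel"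
    and h_meas: "h \<in> borel \<rightarrow>\<^sub>M Y"
    and S_pd: "pos_def S"
    and S0_pd: "pos_def S0"
    and data_inputs: "\<forall>i<N. us i \<in> space U"
    and alpha: "0 < \<alpha>" "\<alpha> < 1"
  shows "\<forall>th \<in> credible_set S S0 mu0 f N xs us xps \<alpha>.
    (let thh = blr_estimate S S0 mu0 f N xs us xps;
         v = sub_kernel S f thh th;
         r = onorm (\<lambda>x. matrix_inv S *v x) * onorm (\<lambda>x. blr_SigmaN S S0 f N xs us *v x)
               * real CARD('n) * chi2_quantile CARD('n) (1 - \<alpha>);
         \<delta> = (\<lambda>xh u. 1 - 2 * std_normal_cdf (- (sqrt r / 2) * norm (f xh u)))
     in (x0, x0) \<in> sim_rel
      \<and> (\<forall>(xh, x) \<in> sim_rel. \<forall>u \<in> space U.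
           measure_space UNIV (sets borel) (v xh x u)
         \<and> v xh x u UNIV \<le> 1
         \<and> v xh x u UNIV = v xh x u sim_rel
         \<and> ennreal (1 - \<delta> xh u) \<le> v xh x u sim_rel
         \<and> (\<forall>A \<in> sets borel. v xh x u (A \<times> UNIV) \<le> emeasure (gauss (transpose thh *v f xh u) S) A)
         \<and> (\<forall>B \<in> sets borel. v xh x u (UNIV \<times> B) \<le> emeasure (gauss (transpose th *v f x u) S) B)
         \<and> h xh = h x)
      \<and> (\<forall>(xh, x) \<in> sim_rel. \<forall>u \<in> space U. \<forall>A \<in> sets borel.
           (\<integral>\<^sup>+ xp. indicator A (xp + transpose thh *v (f xh u - f x u), xp)
               \<partial>gauss (transpose th *v f x u) S) \<ge> v xh x u A))"
  apply (intro ballI)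
  subgoal premises th for th
    \<comment> \<open>\<open>where f=f\<close> fixes the input type, which \<open>OF\<close> leaves schematic.\<close>
    using sub_kernel_simulation[OF S_pd credible_set_bound[OF S_pd S0_pd th], where f=f]
    by (simp add: Let_def)
  done

end
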